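(* Let $\mathcal{H}$ and $\mathcal{K}$ be finite-dimensional complex Hilbert spaces, and let $\mathcal{HP}$ be the set of all Hermitian-preserving trace-preserving linear maps $B(\mathcal{H})\to B(\mathcal{K})$, with the topology induced by any norm. Let $\mathcal{SP}\subseteq\mathcal{HP}$ and $\mathcal{SN}\subseteq\mathcal{HP}$ be the subsets of SP maps and SN maps respectively. Then, with interior and closure taken in $\mathcal{HP}$, $$\operatorname{int}(\mathcal{SN})=\mathcal{SP}\quad\text{and}\quad \overline{\mathcal{SP}}=\mathcal{SN}.$$
   Context: $B(\mathcal{H})$ denotes all linear operators on $\mathcal{H}$; a density matrix is a positive semidefinite operator of trace one. A map is Hermitian-preserving if $\Psi(X^\dagger)=\Psi(X)^\dagger$ and trace-preserving if $\operatorname{Tr}\Psi(X)=\operatorname{Tr}X$. An HPTP map $\Psi$ is SP (semi-positive) if there is an invertible density matrix $\rho\in B(\mathcal{H})$ such that $\Psi(\rho)$ is an invertible density matrix; it is SN (semi-nonnegative) if there is a density matrix $\rho$ such that $\Psi(\rho)$ is a density matrix. *)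

theory Defs
  imports "HOL-Analysis.Analysis"
begin

text \<open>Operators on a finite-dimensional complex Hilbert space H = C^'n are
  matrices of type complex^'n^'n.\<close>

definition adj :: "complex^'n^'n \<Rightarrow> complex^'n^'n" where
  "adj X = (\<chi> i j. cnj (X $ j $ i))"

definition mtrace :: "complex^'n^'n \<Rightarrow> complex" where
  "mtrace X = (\<Sum>i\<in>UNIV. X $ i $ i)"

definition cscale :: "complex \<Rightarrow> complex^'n^'n \<Rightarrow> complex^'n^'n" where
  "cscale c X = (\<chi> i j. c * X $ i $ j)"

definition psd :: "complex^'n^'n \<Rightarrow> bool" where
  "psd X \<longleftrightarrow> (\<forall>v :: complex^'n.
     (\<Sum>i\<in>UNIV. \<Sum>j\<in>UNIV. cnj (v $ i) * X $ i $ j * v $ j) \<in> \<real> \<and>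
     0 \<le> Re (\<Sum>i\<in>UNIV. \<Sum>j\<in>UNIV. cnj (v $ i) * X $ i $ j * v $ j))"

definition density :: "complex^'n^'n \<Rightarrow> bool" where
  "density X \<longleftrightarrow> psd X \<and> mtrace X = 1"

text \<open>Elements of the blinfun type are (real-)linear and bounded; complex
  homogeneity is required explicitly. The topology is the operator-norm one.\<close>

definition HP :: "((complex^'n^'n) \<Rightarrow>\<^sub>L (complex^'m^'m)) set" where
  "HP = {\<Psi>. (\<forall>c X. blinfun_apply \<Psi> (cscale c X) = cscale c (blinfun_apply \<Psi> X)) \<and>
            (\<forall>X. blinfun_apply \<Psi> (adj X) = adj (blinfun_apply \<Psi> X)) \<and>
            (\<forall>X. mtrace (blinfun_apply \<Psi> X) = mtrace X)}"

definition SP :: "((complex^'n^'n) \<Rightarrow>\<^sub>L (complex^'m^'m)) set" where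
  "SP = {\<Psi>\<in>HP. \<exists>\<rho>. density \<rho> \<and> invertible \<rho> \<and>
                     density (blinfun_apply \<Psi> \<rho>) \<and> invertible (blinfun_apply \<Psi> \<rho>)}"

definition SN :: "((complex^'n^'n) \<Rightarrow>\<^sub>L (complex^'m^'m)) set" where
  "SN = {\<Psi>\<in>HP. \<exists>\<rho>. density \<rho> \<and> density (blinfun_apply \<Psi> \<rho>)}"

end

theory Submission
  imports Defs
begin

text \<open>Call a matrix positive definite if its quadratic form is bounded below by a positive
  multiple of \<open>\<parallel>v\<parallel>\<^sup>2\<close>. A map \<open>\<Psi>\<close> in \<open>HP\<close> is SP iff it sends some density matrix to a
  positive definite matrix: mixing the input with a little of the maximally mixed state makes
  it invertible and changes the output only slightly. Positive definiteness is stable under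
  small Hermitian perturbations, so \<open>SP\<close> is relatively open, and \<open>SN\<close> is relatively closed
  because the density matrices form a compact set. Finally let \<open>\<Delta>\<close> be the completely
  depolarizing channel. For \<open>\<Psi> \<in> SN\<close> and \<open>0 < t \<le> 1\<close> the mixture \<open>(1 - t) \<Psi> + t \<Delta>\<close> is SP,
  so \<open>SN\<close> lies in the closure of \<open>SP\<close>. Conversely, if \<open>SN\<close> contains a neighbourhood of \<open>\<Psi>\<close>,
  then it contains \<open>(1 + c) \<Psi> - c \<Delta>\<close> for small \<open>c > 0\<close>, and \<open>\<Psi>\<close> is a proper mixture of
  this map with \<open>\<Delta>\<close>, hence SP.\<close>

definition sesq :: "complex^'n^'n \<Rightarrow> complex^'n \<Rightarrow> complex^'n \<Rightarrow> complex" where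
  "sesq X v w = (\<Sum>i\<in>UNIV. \<Sum>j\<in>UNIV. cnj (v $ i) * X $ i $ j * w $ j)"

definition hermitian :: "complex^'n^'n \<Rightarrow> bool" where
  "hermitian X \<longleftrightarrow> adj X = X"

lemma mat_nth: "mat k $ i $ j = (if i = j then k else 0)"
  by (simp add: mat_def)

lemma mat_scaleR_nth: "(r *\<^sub>R X) $ i $ j = of_real r * X $ i $ j" for X :: "complex^'n^'m"
  by (simp only: vector_scaleR_component) (simp add: scaleR_conv_of_real)

lemma psd_iff_sesq: "psd X \<longleftrightarrow> (\<forall>v. sesq X v v \<in> \<real> \<and> 0 \<le> Re (sesq X v v))"
  by (simp add: psd_def sesq_def)

lemma sesq_mult_vec: "sesq X v w = (\<Sum>i\<in>UNIV. cnj (v $ i) * (X *v w) $ i)"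
  by (simp add: sesq_def matrix_vector_mult_def sum_distrib_left mult.assoc)

lemma sum_cnj_mult_self: "(\<Sum>i\<in>UNIV. cnj (w $ i) * w $ i) = of_real ((norm w)\<^sup>2)"
proof -
  have "(norm w)\<^sup>2 = (\<Sum>i\<in>UNIV. (cmod (w $ i))\<^sup>2)"
    by (simp add: norm_vec_def L2_set_def sum_nonneg)
  then show ?thesis
    unfolding of_real_sum by (simp add: complex_norm_square mult.commute del: of_real_power)
qed

lemma sesq_add_smult:
  "sesq X (v + c *s w) (v + c *s w) =
     sesq X v v + c * sesq X v w + cnj c * sesq X w v + cnj c * c * sesq X w w"
proof -
  have "cnj (v$i + c * w$i) * X$i$j * (v$j + c * w$j) =
      cnj (v$i) * X$i$j * v$j + c * (cnj (v$i) * X$i$j * w$j)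
      + cnj c * (cnj (w$i) * X$i$j * v$j) + cnj c * c * (cnj (w$i) * X$i$j * w$j)" for i j
    by (simp add: algebra_simps)
  then show ?thesis
    by (simp add: sesq_def sum.distrib sum_distrib_left)
qed

lemma sesq_smult_left: "sesq X (a *s v) w = cnj a * sesq X v w"
  by (simp add: sesq_def sum_distrib_left mult.assoc)

lemma sesq_smult_right: "sesq X v (a *s w) = a * sesq X v w"
  by (simp add: sesq_def sum_distrib_left algebra_simps)

lemma sesq_axis: "sesq X (axis i 1) (axis j 1) = X $ i $ j"
proof -
  have "cnj (axis i 1 $ k) * X $ k $ l * axis j 1 $ l =
      (if l = j then if k = i then X $ i $ j else 0 else 0)" for k l
    by (simp add: axis_def)
  then show ?thesis
    by (simp add: sesq_def)
qed

lemma sesq_add: "sesq (X + Y) v w = sesq X v w + sesq Y v w"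
  by (simp add: sesq_def ring_distribs sum.distrib)

lemma sesq_scaleR: "sesq (r *\<^sub>R X) v w = of_real r * sesq X v w"
  unfolding sesq_def mat_scaleR_nth by (simp add: sum_distrib_left algebra_simps)

lemma sesq_mat: "sesq (mat k) v v = k * of_real ((norm v)\<^sup>2)"
proof -
  have "cnj (v $ i) * mat k $ i $ j * v $ j = (if j = i then k * (cnj (v $ i) * v $ i) else 0)"
    for i j
    by (simp add: mat_nth)
  then show ?thesis
    unfolding sesq_def by (simp flip: sum_distrib_left add: sum_cnj_mult_self)
qed

lemma norm_sesq_le:
  fixes X :: "complex^'n^'n"
  shows "cmod (sesq X v w) \<le> (real CARD('n))\<^sup>2 * norm X * norm v * norm w"
proof -
  have "cmod (sesq X v w) \<le> (\<Sum>i\<in>UNIV. \<Sum>j\<in>UNIV. cmod (cnj (v $ i) * X $ i $ j * w $ j))"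
    unfolding sesq_def by (rule order_trans[OF norm_sum sum_mono[OF norm_sum]])
  also have "\<dots> \<le> (\<Sum>i\<in>(UNIV::'n set). \<Sum>j\<in>(UNIV::'n set). norm X * norm v * norm w)"
  proof (intro sum_mono)
    fix i j
    have "cmod (X $ i $ j) \<le> norm X"
      using Finite_Cartesian_Product.norm_nth_le[of "X $ i" j]
        Finite_Cartesian_Product.norm_nth_le[of X i] by linarith
    then have "cmod (v $ i) * cmod (X $ i $ j) * cmod (w $ j) \<le> norm v * norm X * norm w"
      using Finite_Cartesian_Product.norm_nth_le[of v i]
        Finite_Cartesian_Product.norm_nth_le[of w j]
      by (intro mult_mono) auto
    then show "cmod (cnj (v $ i) * X $ i $ j * w $ j) \<le> norm X * norm v * norm w"
      by (simp add: norm_mult mult_ac)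
  qed
  finally show ?thesis
    by (simp add: power2_eq_square mult.assoc)
qed

lemma hermitian_iff_nth: "hermitian X \<longleftrightarrow> (\<forall>i j. cnj (X $ i $ j) = X $ j $ i)"
  by (auto simp: hermitian_def adj_def vec_eq_iff)

lemma hermitian_diff: "hermitian X \<Longrightarrow> hermitian Y \<Longrightarrow> hermitian (X - Y)"
  by (simp add: hermitian_iff_nth)

lemma hermitian_scaleR: "hermitian X \<Longrightarrow> hermitian (r *\<^sub>R X)"
  by (simp add: hermitian_iff_nth mat_scaleR_nth)

lemma hermitian_mat_of_real: "hermitian (mat (of_real r))"
  by (simp add: hermitian_iff_nth mat_nth)

lemma sesq_hermitian_swap:
  assumes "hermitian X"
  shows "sesq X v w = cnj (sesq X w v)"
proof -
  have "cnj (sesq X w v) = (\<Sum>i\<in>UNIV. \<Sum>j\<in>UNIV. w $ i * X $ j $ i * cnj (v $ j))"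
    using assms by (simp add: sesq_def hermitian_iff_nth)
  also have "\<dots> = sesq X v w"
    unfolding sesq_def by (subst sum.swap) (simp add: ac_simps)
  finally show ?thesis
    by simp
qed

lemma hermitian_iff_sesq_real: "hermitian X \<longleftrightarrow> (\<forall>v. sesq X v v \<in> \<real>)"
proof
  assume "hermitian X"
  then show "\<forall>v. sesq X v v \<in> \<real>"
    using sesq_hermitian_swap Reals_cnj_iff by metis
next
  assume real: "\<forall>v. sesq X v v \<in> \<real>"
  have "cnj (X $ i $ j) = X $ j $ i" for i j
  proof -
    let ?u = "\<lambda>c. axis i 1 + c *s axis j 1"
    have u: "sesq X (?u c) (?u c) = X$i$i + c * X$i$j + cnj c * X$j$i + cnj c * c * X$j$j" for c
      by (simp add: sesq_add_smult sesq_axis)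
    have "Im (X$i$i) = 0" "Im (X$j$j) = 0"
      using real[rule_format, of "axis i 1"] real[rule_format, of "axis j 1"]
      by (simp_all add: sesq_axis complex_is_Real_iff)
    moreover have "Im (sesq X (?u 1) (?u 1)) = 0" "Im (sesq X (?u \<i>) (?u \<i>)) = 0"
      using real by (simp_all add: complex_is_Real_iff)
    ultimately have "Im (X$i$j + X$j$i) = 0" "Re (X$i$j) - Re (X$j$i) = 0"
      unfolding u by simp_all
    then show ?thesis
      by (simp add: complex_eq_iff)
  qed
  then show "hermitian X"
    by (simp add: hermitian_iff_nth)
qed

lemma psd_hermitian: "psd X \<Longrightarrow> hermitian X"
  by (simp add: psd_iff_sesq hermitian_iff_sesq_real)

definition scalar_le :: "real \<Rightarrow> complex^'n^'n \<Rightarrow> bool" where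
  "scalar_le c X \<longleftrightarrow> (\<forall>v. sesq X v v \<in> \<real> \<and> c * (norm v)\<^sup>2 \<le> Re (sesq X v v))"

definition posdef :: "complex^'n^'n \<Rightarrow> bool" where
  "posdef X \<longleftrightarrow> (\<exists>c>0. scalar_le c X)"

lemma psd_iff_scalar_le: "psd X \<longleftrightarrow> scalar_le 0 X"
  by (simp add: psd_iff_sesq scalar_le_def)

lemma scalar_le_add: "scalar_le a X \<Longrightarrow> scalar_le b Y \<Longrightarrow> scalar_le (a + b) (X + Y)"
  by (auto simp: scalar_le_def sesq_add distrib_right intro: add_mono)

lemma scalar_le_scaleR: "scalar_le a X \<Longrightarrow> 0 \<le> r \<Longrightarrow> scalar_le (r * a) (r *\<^sub>R X)"
  by (auto simp: scalar_le_def sesq_scaleR mult.assoc intro: mult_left_mono)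

lemma scalar_le_mono: "scalar_le a X \<Longrightarrow> b \<le> a \<Longrightarrow> scalar_le b X"
  unfolding scalar_le_def by (meson mult_right_mono order_trans zero_le_power2)

lemma scalar_le_mat: "scalar_le d (mat (of_real d))"
  by (simp add: scalar_le_def sesq_mat)

lemma scalar_le_hermitian:
  fixes Z :: "complex^'n^'n"
  assumes "hermitian Z"
  shows "scalar_le (- (real CARD('n))\<^sup>2 * norm Z) Z"
  unfolding scalar_le_def
proof (intro allI conjI)
  fix v
  show "sesq Z v v \<in> \<real>"
    using assms hermitian_iff_sesq_real by blast
  show "- (real CARD('n))\<^sup>2 * norm Z * (norm v)\<^sup>2 \<le> Re (sesq Z v v)"
    using norm_sesq_le[of Z v v] abs_Re_le_cmod[of "sesq Z v v"]
    by (simp add: power2_eq_square mult.assoc)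
qed

lemma posdef_imp_psd: "posdef X \<Longrightarrow> psd X"
  unfolding posdef_def psd_iff_scalar_le by (auto intro: scalar_le_mono)

lemma posdef_imp_invertible:
  assumes "posdef X"
  shows "invertible X"
proof -
  obtain c where "c > 0" "scalar_le c X"
    using assms posdef_def by blast
  have "v = 0" if "X *v v = 0" for v
  proof -
    have "c * (norm v)\<^sup>2 \<le> Re (sesq X v v)"
      using \<open>scalar_le c X\<close> scalar_le_def by blast
    also have "sesq X v v = 0"
      using that by (simp add: sesq_mult_vec)
    finally have "c * (norm v)\<^sup>2 \<le> 0"
      by simp
    then show "v = 0"
      using \<open>c > 0\<close> by (simp add: mult_le_0_iff)
  qed
  then show ?thesis
    by (simp add: invertible_left_inverse matrix_left_invertible_ker)
qed

lemma posdef_mat: "c > 0 \<Longrightarrow> posdef (mat (of_real c))"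
  using posdef_def scalar_le_mat by blast

lemma posdef_add_psd_scaleR:
  assumes "psd A" "posdef B" "0 \<le> s" "0 < t"
  shows "posdef (s *\<^sub>R A + t *\<^sub>R B)"
proof -
  obtain c where "c > 0" "scalar_le c B"
    using assms(2) posdef_def by blast
  then have "scalar_le (s * 0 + t * c) (s *\<^sub>R A + t *\<^sub>R B)"
    using assms by (intro scalar_le_add scalar_le_scaleR) (auto simp: psd_iff_scalar_le)
  moreover have "s * 0 + t * c > 0"
    using \<open>c > 0\<close> \<open>t > 0\<close> by simp
  ultimately show ?thesis
    unfolding posdef_def by blast
qed

lemma posdef_perturb:
  fixes A :: "complex^'n^'n"
  assumes "posdef A"
  obtains e where "e > 0" "\<And>B. hermitian B \<Longrightarrow> norm B < e \<Longrightarrow> posdef (A + B)"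
proof -
  obtain c where c: "c > 0" "scalar_le c A"
    using assms posdef_def by blast
  define K where "K = (real CARD('n))\<^sup>2"
  have "K > 0"
    by (simp add: K_def)
  show ?thesis
  proof (rule that)
    show "c / K > 0"
      using c \<open>K > 0\<close> by simp
    fix B :: "complex^'n^'n"
    assume "hermitian B" "norm B < c / K"
    have "scalar_le (c + - K * norm B) (A + B)"
      unfolding K_def using scalar_le_add[OF c(2) scalar_le_hermitian[OF \<open>hermitian B\<close>]] .
    moreover have "c + - K * norm B > 0"
      using \<open>norm B < c / K\<close> \<open>K > 0\<close> by (simp add: field_simps)
    ultimately show "posdef (A + B)"
      using posdef_def by blast
  qed
qed

lemma nonneg_quadratic_imp_linear_coeff_zero:
  fixes a b :: real
  assumes "\<And>t. 0 \<le> 2 * t * a + t\<^sup>2 * b"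
  shows "a = 0"
proof (rule ccontr)
  assume "a \<noteq> 0"
  define k where "k = \<bar>b\<bar> + 1"
  have k: "k > 0" "b \<le> k"
    unfolding k_def by auto
  define t where "t = - a / k"
  have "2 * t * a = - 2 * a\<^sup>2 / k"
    unfolding t_def by (simp add: power2_eq_square)
  moreover have "t\<^sup>2 * b \<le> t\<^sup>2 * k"
    using k by (intro mult_left_mono) auto
  moreover have "t\<^sup>2 * k = a\<^sup>2 / k"
    unfolding t_def using k by (simp add: power2_eq_square field_simps)
  moreover have "a\<^sup>2 / k > 0"
    using \<open>a \<noteq> 0\<close> k by simp
  ultimately have "2 * t * a + t\<^sup>2 * b < 0"
    by linarith
  with assms show False
    by (meson not_le)
qed

text \<open>Testing the form on \<open>v - t Y v\<close> for real \<open>t\<close> gives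
  \<open>0 \<le> -2 t \<parallel>Y v\<parallel>\<^sup>2 + t\<^sup>2 \<langle>Y v, Y Y v\<rangle>\<close>.\<close>

lemma psd_sesq_eq_0_imp_kernel:
  assumes "psd Y" "sesq Y v v = 0"
  shows "Y *v v = 0"
proof -
  define w where "w = Y *v v"
  have wv: "sesq Y w v = of_real ((norm w)\<^sup>2)"
    by (simp add: sesq_mult_vec w_def sum_cnj_mult_self)
  then have vw: "sesq Y v w = of_real ((norm w)\<^sup>2)"
    using sesq_hermitian_swap[OF psd_hermitian[OF assms(1)], of v w] by simp
  have "0 \<le> 2 * t * - (norm w)\<^sup>2 + t\<^sup>2 * Re (sesq Y w w)" for t :: real
  proof -
    have "0 \<le> Re (sesq Y (v + (- of_real t) *s w) (v + (- of_real t) *s w))"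
      using assms(1) by (simp add: psd_iff_sesq)
    also have "\<dots> = 2 * t * - (norm w)\<^sup>2 + t\<^sup>2 * Re (sesq Y w w)"
      unfolding sesq_add_smult assms(2) wv vw by (simp add: power2_eq_square)
    finally show ?thesis .
  qed
  then have "- (norm w)\<^sup>2 = 0"
    by (rule nonneg_quadratic_imp_linear_coeff_zero)
  then show ?thesis
    by (simp add: w_def)
qed

lemma sesq_scaleR_vec: "sesq X (r *\<^sub>R v) (r *\<^sub>R v) = of_real (r\<^sup>2) * sesq X v v"
proof -
  have "r *\<^sub>R v = of_real r *s v"
    by (simp only: vec_eq_iff vector_scaleR_component vector_smult_component)
      (simp add: scaleR_conv_of_real)
  then show ?thesis
    by (simp add: sesq_smult_left sesq_smult_right power2_eq_square)
qed

lemma scalar_le_if_sphere: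
  fixes X :: "complex^'n^'n"
  assumes "hermitian X" "\<And>v. norm v = 1 \<Longrightarrow> c \<le> Re (sesq X v v)"
  shows "scalar_le c X"
  unfolding scalar_le_def
proof (intro allI conjI)
  fix v :: "complex^'n"
  show "sesq X v v \<in> \<real>"
    using assms(1) hermitian_iff_sesq_real by blast
  show "c * (norm v)\<^sup>2 \<le> Re (sesq X v v)"
  proof (cases "v = 0")
    case True
    then show ?thesis
      by (simp add: sesq_def)
  next
    case False
    then have "c \<le> Re (sesq X ((1 / norm v) *\<^sub>R v) ((1 / norm v) *\<^sub>R v))"
      by (intro assms(2)) simp
    then show ?thesis
      using False by (simp add: sesq_scaleR_vec field_simps)
  qed
qed

lemma psd_invertible_imp_posdef:
  fixes Y :: "complex^'n^'n"
  assumes "psd Y" "invertible Y"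
  shows "posdef Y"
proof -
  let ?S = "sphere (0::complex^'n) 1"
  let ?q = "\<lambda>v. Re (sesq Y v v)"
  have real: "sesq Y v v \<in> \<real>" "0 \<le> ?q v" for v
    using assms(1) psd_iff_sesq by blast+
  obtain x :: "complex^'n" where "norm x = 1"
    using vector_choose_size[of 1] by auto
  then have "?S \<noteq> {}"
    by auto
  moreover have "continuous_on ?S ?q"
    unfolding sesq_def by (intro continuous_intros)
  ultimately obtain v0 where v0: "v0 \<in> ?S" "\<And>v. v \<in> ?S \<Longrightarrow> ?q v0 \<le> ?q v"
    using continuous_attains_inf[of ?S ?q] by auto
  have "?q v0 \<noteq> 0"
  proof
    assume "?q v0 = 0"
    then have "sesq Y v0 v0 = 0"
      using real(1)[of v0] by (simp add: complex_eq_iff complex_is_Real_iff)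
    then have "Y *v v0 = 0"
      by (rule psd_sesq_eq_0_imp_kernel[OF assms(1)])
    then have "v0 = 0"
      using assms(2) invertible_def matrix_left_invertible_ker by blast
    with v0(1) show False
      by simp
  qed
  then have "?q v0 > 0"
    using real(2)[of v0] by linarith
  moreover have "scalar_le (?q v0) Y"
    using psd_hermitian[OF assms(1)] v0(2) by (intro scalar_le_if_sphere) auto
  ultimately show ?thesis
    unfolding posdef_def by blast
qed

lemma density_invertible_iff_posdef: "density X \<and> invertible X \<longleftrightarrow> posdef X \<and> mtrace X = 1"
  using posdef_imp_psd posdef_imp_invertible psd_invertible_imp_posdef density_def by blast

lemma density_hermitian: "density X \<Longrightarrow> hermitian X"
  by (simp add: density_def psd_hermitian)

lemma norm_nth_density_le:
  assumes "density X"
  shows "cmod (X $ i $ j) \<le> 2"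
proof -
  have psd: "psd X" and tr: "mtrace X = 1"
    using assms density_def by auto
  have herm: "cnj (X $ i $ j) = X $ j $ i"
    using psd_hermitian[OF psd] hermitian_iff_nth by blast
  have nonneg: "0 \<le> Re (sesq X v v)" for v
    using psd psd_iff_sesq by blast
  have diag_nonneg: "0 \<le> Re (X $ k $ k)" for k
    using nonneg[of "axis k 1"] by (simp add: sesq_axis)
  have diag_le: "Re (X $ k $ k) \<le> 1" for k
  proof -
    have "Re (X $ k $ k) \<le> (\<Sum>l\<in>UNIV. Re (X $ l $ l))"
      by (rule member_le_sum) (auto intro: diag_nonneg)
    also have "\<dots> = 1"
      using tr by (simp add: mtrace_def flip: Re_sum)
    finally show ?thesis .
  qed
  let ?u = "\<lambda>c. axis i 1 + c *s axis j 1"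
  have u: "Re (sesq X (?u c) (?u c)) =
      Re (X$i$i) + Re (c * X$i$j) + Re (cnj c * cnj (X$i$j)) + Re (cnj c * c * X$j$j)" for c
    by (simp add: sesq_add_smult sesq_axis herm)
  have "0 \<le> Re (X$i$i) + 2 * Re (X$i$j) + Re (X$j$j)"
       "0 \<le> Re (X$i$i) - 2 * Re (X$i$j) + Re (X$j$j)"
       "0 \<le> Re (X$i$i) - 2 * Im (X$i$j) + Re (X$j$j)"
       "0 \<le> Re (X$i$i) + 2 * Im (X$i$j) + Re (X$j$j)"
    using nonneg[of "?u 1"] nonneg[of "?u (-1)"] nonneg[of "?u \<i>"] nonneg[of "?u (-\<i>)"]
    unfolding u by simp_all
  then have "\<bar>Re (X$i$j)\<bar> \<le> 1" "\<bar>Im (X$i$j)\<bar> \<le> 1"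
    using diag_le[of i] diag_le[of j] by linarith+
  then show ?thesis
    using cmod_le[of "X$i$j"] by linarith
qed

lemma norm_vec_le_sum: "norm x \<le> (\<Sum>i\<in>UNIV. norm (x $ i))"
  unfolding norm_vec_def by (rule L2_set_le_sum) simp

lemma norm_density_le:
  fixes X :: "complex^'n^'n"
  assumes "density X"
  shows "norm X \<le> 2 * (real CARD('n))\<^sup>2"
proof -
  have "norm X \<le> (\<Sum>i\<in>UNIV. \<Sum>j\<in>UNIV. cmod (X $ i $ j))"
    using norm_vec_le_sum[of X] norm_vec_le_sum[of "X $ _"] by (meson order_trans sum_mono)
  also have "\<dots> \<le> (\<Sum>i\<in>(UNIV::'n set). \<Sum>j\<in>(UNIV::'n set). 2)"
    using norm_nth_density_le[OF assms] by (intro sum_mono) auto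
  finally show ?thesis
    by (simp add: power2_eq_square)
qed

lemma compact_density: "compact {X :: complex^'n^'n. density X}"
proof (rule compact_eq_bounded_closed[THEN iffD2, OF conjI])
  show "bounded {X :: complex^'n^'n. density X}"
    unfolding bounded_iff using norm_density_le by blast
  have "{X :: complex^'n^'n. density X} =
      {X. (\<forall>v. Im (sesq X v v) = 0 \<and> 0 \<le> Re (sesq X v v)) \<and> mtrace X = 1}"
    by (auto simp: density_def psd_iff_sesq complex_is_Real_iff)
  also have "closed \<dots>"
    unfolding sesq_def mtrace_def
    by (intro closed_Collect_conj closed_Collect_all closed_Collect_eq closed_Collect_le
        continuous_intros)
  finally show "closed {X :: complex^'n^'n. density X}" .
qed

lemma adj_add: "adj (A + B) = adj A + adj B"
  by (simp add: adj_def vec_eq_iff)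

lemma adj_scaleR: "adj (r *\<^sub>R A) = r *\<^sub>R adj A"
  by (simp add: adj_def vec_eq_iff mat_scaleR_nth)

lemma cscale_add: "cscale c (A + B) = cscale c A + cscale c B"
  by (simp add: cscale_def vec_eq_iff ring_distribs)

lemma cscale_scaleR: "cscale c (r *\<^sub>R A) = r *\<^sub>R cscale c A"
  by (simp add: cscale_def vec_eq_iff mat_scaleR_nth ac_simps)

lemma mtrace_add: "mtrace (A + B) = mtrace A + mtrace B"
  by (simp add: mtrace_def sum.distrib)

lemma mtrace_scaleR: "mtrace (r *\<^sub>R A) = of_real r * mtrace A"
  unfolding mtrace_def mat_scaleR_nth by (simp add: sum_distrib_left)

lemma mtrace_mat: "mtrace (mat k :: complex^'n^'n) = of_nat CARD('n) * k"
  by (simp add: mtrace_def mat_nth)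

definition maximally_mixed :: "complex^'n^'n" where
  "maximally_mixed = mat (of_real (1 / real CARD('n)))"

lemma hermitian_maximally_mixed: "hermitian maximally_mixed"
  unfolding maximally_mixed_def by (rule hermitian_mat_of_real)

lemma mtrace_maximally_mixed: "mtrace (maximally_mixed :: complex^'n^'n) = 1"
  by (simp add: maximally_mixed_def mtrace_mat)

lemma posdef_mix_maximally_mixed:
  assumes "psd A" "0 < s" "s \<le> 1"
  shows "posdef ((1 - s) *\<^sub>R A + s *\<^sub>R maximally_mixed)"
  unfolding maximally_mixed_def using assms by (intro posdef_add_psd_scaleR posdef_mat) auto

lemma affine_HP: "affine HP"
  unfolding affine_def
proof (intro ballI allI impI)
  fix P Q :: "(complex^'n^'n) \<Rightarrow>\<^sub>L (complex^'m^'m)" and u v :: real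
  assume "P \<in> HP" "Q \<in> HP" "u + v = 1"
  then have P: "blinfun_apply P (cscale c X) = cscale c (blinfun_apply P X)"
      "blinfun_apply P (adj X) = adj (blinfun_apply P X)"
      "mtrace (blinfun_apply P X) = mtrace X"
    and Q: "blinfun_apply Q (cscale c X) = cscale c (blinfun_apply Q X)"
      "blinfun_apply Q (adj X) = adj (blinfun_apply Q X)"
      "mtrace (blinfun_apply Q X) = mtrace X" for c X
    unfolding HP_def by auto
  show "u *\<^sub>R P + v *\<^sub>R Q \<in> HP"
    unfolding HP_def
  proof (intro CollectI conjI allI)
    fix c X
    show "blinfun_apply (u *\<^sub>R P + v *\<^sub>R Q) (cscale c X) =
        cscale c (blinfun_apply (u *\<^sub>R P + v *\<^sub>R Q) X)"
      by (simp only: blinfun.add_left blinfun.scaleR_left P Q cscale_add cscale_scaleR)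
    show "blinfun_apply (u *\<^sub>R P + v *\<^sub>R Q) (adj X) =
        adj (blinfun_apply (u *\<^sub>R P + v *\<^sub>R Q) X)"
      by (simp only: blinfun.add_left blinfun.scaleR_left P Q adj_add adj_scaleR)
    have "mtrace (blinfun_apply (u *\<^sub>R P + v *\<^sub>R Q) X) = of_real (u + v) * mtrace X"
      by (simp only: blinfun.add_left blinfun.scaleR_left mtrace_add mtrace_scaleR P Q)
        (simp add: algebra_simps)
    then show "mtrace (blinfun_apply (u *\<^sub>R P + v *\<^sub>R Q) X) = mtrace X"
      using \<open>u + v = 1\<close> by simp
  qed
qed

lemma HP_hermitian: "\<Psi> \<in> HP \<Longrightarrow> hermitian X \<Longrightarrow> hermitian (blinfun_apply \<Psi> X)"
proof -
  assume "\<Psi> \<in> HP" "hermitian X"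
  then have "blinfun_apply \<Psi> X = blinfun_apply \<Psi> (adj X)"
    by (simp add: hermitian_def)
  also have "\<dots> = adj (blinfun_apply \<Psi> X)"
    using \<open>\<Psi> \<in> HP\<close> HP_def by blast
  finally show ?thesis
    by (simp add: hermitian_def)
qed

lemma HP_mtrace: "\<Psi> \<in> HP \<Longrightarrow> mtrace (blinfun_apply \<Psi> X) = mtrace X"
  unfolding HP_def by blast

definition depolarizing :: "(complex^'n^'n) \<Rightarrow>\<^sub>L (complex^'m^'m)" where
  "depolarizing = Blinfun (\<lambda>X. mat (mtrace X / of_nat CARD('m)))"

lemma depolarizing_apply:
  "blinfun_apply (depolarizing :: (complex^'n^'n) \<Rightarrow>\<^sub>L (complex^'m^'m)) X =
    mat (mtrace X / of_nat CARD('m))"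
proof -
  have "linear (\<lambda>X :: complex^'n^'n. mat (mtrace X / of_nat CARD('m)) :: complex^'m^'m)"
  proof (rule linearI)
    fix X Y :: "complex^'n^'n" and r :: real
    show "(mat (mtrace (X + Y) / of_nat CARD('m)) :: complex^'m^'m) =
        mat (mtrace X / of_nat CARD('m)) + mat (mtrace Y / of_nat CARD('m))"
      by (simp add: vec_eq_iff mat_nth mtrace_add add_divide_distrib)
    show "(mat (mtrace (r *\<^sub>R X) / of_nat CARD('m)) :: complex^'m^'m) =
        r *\<^sub>R mat (mtrace X / of_nat CARD('m))"
      by (simp only: vec_eq_iff mat_scaleR_nth mat_nth mtrace_scaleR) simp
  qed
  then show ?thesis
    unfolding depolarizing_def
    by (simp add: bounded_linear_Blinfun_apply linear_conv_bounded_linear)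
qed

lemma depolarizing_HP: "(depolarizing :: (complex^'n^'n) \<Rightarrow>\<^sub>L (complex^'m^'m)) \<in> HP"
  unfolding HP_def mem_Collect_eq depolarizing_apply
proof (intro conjI allI)
  fix c and X :: "complex^'n^'n"
  show "(mat (mtrace (cscale c X) / of_nat CARD('m)) :: complex^'m^'m) =
      cscale c (mat (mtrace X / of_nat CARD('m)))"
    by (simp add: vec_eq_iff mat_nth cscale_def mtrace_def sum_distrib_left)
  show "(mat (mtrace (adj X) / of_nat CARD('m)) :: complex^'m^'m) =
      adj (mat (mtrace X / of_nat CARD('m)))"
    by (simp add: vec_eq_iff mat_nth adj_def mtrace_def)
  show "mtrace (mat (mtrace X / of_nat CARD('m)) :: complex^'m^'m) = mtrace X"
    by (simp add: mtrace_def mat_nth)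
qed

lemma depolarizing_apply_trace_1:
  "mtrace \<rho> = 1 \<Longrightarrow>
    blinfun_apply (depolarizing :: (complex^'n^'n) \<Rightarrow>\<^sub>L (complex^'m^'m)) \<rho> = maximally_mixed"
  by (simp add: depolarizing_apply maximally_mixed_def)

lemma SP_iff_posdef:
  fixes \<Psi> :: "(complex^'n^'n) \<Rightarrow>\<^sub>L (complex^'m^'m)"
  shows "\<Psi> \<in> SP \<longleftrightarrow>
    \<Psi> \<in> HP \<and> (\<exists>\<rho>. posdef \<rho> \<and> mtrace \<rho> = 1 \<and> posdef (blinfun_apply \<Psi> \<rho>))"
proof -
  have "density \<rho> \<and> invertible \<rho> \<and>
        density (blinfun_apply \<Psi> \<rho>) \<and> invertible (blinfun_apply \<Psi> \<rho>) \<longleftrightarrow>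
      posdef \<rho> \<and> mtrace \<rho> = 1 \<and> posdef (blinfun_apply \<Psi> \<rho>)" if "\<Psi> \<in> HP" for \<rho>
    using density_invertible_iff_posdef[of \<rho>]
      density_invertible_iff_posdef[of "blinfun_apply \<Psi> \<rho>"] HP_mtrace[OF that, of \<rho>]
    by auto
  then show ?thesis
    unfolding SP_def by auto
qed

lemma SP_iff_posdef_image:
  fixes \<Psi> :: "(complex^'n^'n) \<Rightarrow>\<^sub>L (complex^'m^'m)"
  shows "\<Psi> \<in> SP \<longleftrightarrow> \<Psi> \<in> HP \<and> (\<exists>\<rho>. density \<rho> \<and> posdef (blinfun_apply \<Psi> \<rho>))"
proof
  assume "\<Psi> \<in> SP"
  then show "\<Psi> \<in> HP \<and> (\<exists>\<rho>. density \<rho> \<and> posdef (blinfun_apply \<Psi> \<rho>))"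
    unfolding SP_def using density_invertible_iff_posdef by blast
next
  assume "\<Psi> \<in> HP \<and> (\<exists>\<rho>. density \<rho> \<and> posdef (blinfun_apply \<Psi> \<rho>))"
  then obtain \<rho> where HP: "\<Psi> \<in> HP" and \<rho>: "density \<rho>"
    and pos: "posdef (blinfun_apply \<Psi> \<rho>)"
    by blast
  obtain e where "e > 0"
    and perturb: "\<And>B. hermitian B \<Longrightarrow> norm B < e \<Longrightarrow> posdef (blinfun_apply \<Psi> \<rho> + B)"
    using posdef_perturb[OF pos] by blast
  define D where "D = blinfun_apply \<Psi> maximally_mixed - blinfun_apply \<Psi> \<rho>"
  define s where "s = e / (norm D + e)"
  have "norm D + e > 0"
    using \<open>e > 0\<close> by (simp add: add_nonneg_pos)
  then have s: "0 < s" "s \<le> 1" "s * norm D < e"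
    using \<open>e > 0\<close> by (auto simp: s_def field_simps)
  define \<rho>s where "\<rho>s = (1 - s) *\<^sub>R \<rho> + s *\<^sub>R maximally_mixed"
  have "posdef \<rho>s"
    unfolding \<rho>s_def using \<rho> s by (intro posdef_mix_maximally_mixed) (auto simp: density_def)
  moreover have "mtrace \<rho>s = 1"
    using \<rho> by (simp add: \<rho>s_def density_def mtrace_add mtrace_scaleR mtrace_maximally_mixed)
  moreover have "hermitian D"
    unfolding D_def using HP_hermitian[OF HP hermitian_maximally_mixed]
      HP_hermitian[OF HP density_hermitian[OF \<rho>]]
    by (rule hermitian_diff)
  then have "posdef (blinfun_apply \<Psi> \<rho> + s *\<^sub>R D)"
    using s by (intro perturb hermitian_scaleR) auto
  moreover have "blinfun_apply \<Psi> \<rho>s = blinfun_apply \<Psi> \<rho> + s *\<^sub>R D"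
    unfolding \<rho>s_def D_def blinfun.add_right blinfun.scaleR_right by (simp add: algebra_simps)
  ultimately show "\<Psi> \<in> SP"
    unfolding SP_iff_posdef using HP by auto
qed

lemma SP_subset_SN: "SP \<subseteq> SN"
  unfolding SP_def SN_def by blast

lemma openin_SP:
  "openin (top_of_set HP) (SP :: ((complex^'n^'n) \<Rightarrow>\<^sub>L (complex^'m^'m)) set)"
  unfolding openin_euclidean_subtopology_iff
proof (intro conjI ballI)
  show "SP \<subseteq> HP"
    unfolding SP_def by blast
  fix P
  assume "P \<in> SP"
  then obtain \<rho> where \<rho>: "density \<rho>" and pos: "posdef (blinfun_apply P \<rho>)" and "P \<in> HP"
    using SP_iff_posdef_image[of P] by blast
  obtain e where "e > 0"
    and perturb: "\<And>B. hermitian B \<Longrightarrow> norm B < e \<Longrightarrow> posdef (blinfun_apply P \<rho> + B)"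
    using posdef_perturb[OF pos] by blast
  show "\<exists>d>0. \<forall>Q\<in>HP. dist Q P < d \<longrightarrow> Q \<in> SP"
  proof (intro exI conjI ballI impI)
    show "e / (norm \<rho> + 1) > 0"
      using \<open>e > 0\<close> by (simp add: add_nonneg_pos)
    fix Q
    assume "Q \<in> HP" "dist Q P < e / (norm \<rho> + 1)"
    define B where "B = blinfun_apply Q \<rho> - blinfun_apply P \<rho>"
    have "hermitian B"
      unfolding B_def using \<open>Q \<in> HP\<close> \<open>P \<in> HP\<close> \<rho>
      by (intro hermitian_diff HP_hermitian density_hermitian)
    have "norm B \<le> norm (Q - P) * norm \<rho>"
      unfolding B_def blinfun.diff_left[symmetric] by (rule norm_blinfun)
    also have "\<dots> \<le> norm (Q - P) * (norm \<rho> + 1)"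
      by (simp add: mult_left_mono)
    also have "\<dots> < e"
      using \<open>dist Q P < e / (norm \<rho> + 1)\<close>
      by (simp add: dist_norm pos_less_divide_eq add_nonneg_pos)
    finally have "posdef (blinfun_apply Q \<rho>)"
      using perturb[OF \<open>hermitian B\<close>] by (simp add: B_def)
    then show "Q \<in> SP"
      using SP_iff_posdef_image[of Q] \<open>Q \<in> HP\<close> \<rho> by blast
  qed
qed

lemma closedin_SN:
  "closedin (top_of_set HP) (SN :: ((complex^'n^'n) \<Rightarrow>\<^sub>L (complex^'m^'m)) set)"
proof -
  let ?C = "{\<Psi> :: (complex^'n^'n) \<Rightarrow>\<^sub>L (complex^'m^'m).
    \<exists>\<rho>. density \<rho> \<and> density (blinfun_apply \<Psi> \<rho>)}"
  have "closed ?C"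
    unfolding closed_sequential_limits
  proof (intro allI impI, elim conjE)
    fix \<Psi> and P :: "(complex^'n^'n) \<Rightarrow>\<^sub>L (complex^'m^'m)"
    assume "\<forall>n. \<Psi> n \<in> ?C" "\<Psi> \<longlonglongrightarrow> P"
    then obtain \<rho> where \<rho>: "\<And>n. density (\<rho> n)"
      and out: "\<And>n. density (blinfun_apply (\<Psi> n) (\<rho> n))"
      by (auto simp: choice_iff)
    obtain r l where "strict_mono r" "density l" and \<rho>_lim: "(\<rho> \<circ> r) \<longlonglongrightarrow> l"
      using compact_density[unfolded compact_eq_seq_compact_metric seq_compact_def] \<rho> by blast
    have "(\<Psi> \<circ> r) \<longlonglongrightarrow> P"
      using \<open>\<Psi> \<longlonglongrightarrow> P\<close> \<open>strict_mono r\<close> by (rule LIMSEQ_subseq_LIMSEQ)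
    then have "(\<lambda>n. blinfun_apply ((\<Psi> \<circ> r) n) ((\<rho> \<circ> r) n)) \<longlonglongrightarrow> blinfun_apply P l"
      using \<rho>_lim by (rule bounded_bilinear.tendsto[OF bounded_bilinear_blinfun_apply])
    then have "blinfun_apply P l \<in> {X. density X}"
      by (rule closed_sequentially[OF compact_imp_closed[OF compact_density], rotated])
        (simp add: out)
    then show "P \<in> ?C"
      using \<open>density l\<close> by blast
  qed
  moreover have "SN = HP \<inter> ?C"
    unfolding SN_def by blast
  ultimately show ?thesis
    by (metis (no_types) closedin_closed_Int)
qed

lemma depolarizing_mix_SP:
  fixes \<Psi> :: "(complex^'n^'n) \<Rightarrow>\<^sub>L (complex^'m^'m)"
  assumes "\<Psi> \<in> SN" "0 < t" "t \<le> 1"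
  shows "(1 - t) *\<^sub>R \<Psi> + t *\<^sub>R depolarizing \<in> SP"
proof -
  obtain \<rho> where "\<Psi> \<in> HP" "density \<rho>" "density (blinfun_apply \<Psi> \<rho>)"
    using assms(1) SN_def by blast
  have "(1 - t) *\<^sub>R \<Psi> + t *\<^sub>R depolarizing \<in> HP"
    by (rule mem_affine[OF affine_HP \<open>\<Psi> \<in> HP\<close> depolarizing_HP]) simp
  moreover have "blinfun_apply ((1 - t) *\<^sub>R \<Psi> + t *\<^sub>R depolarizing) \<rho> =
      (1 - t) *\<^sub>R blinfun_apply \<Psi> \<rho> + t *\<^sub>R maximally_mixed"
    using \<open>density \<rho>\<close>
    by (simp add: blinfun.add_left blinfun.scaleR_left depolarizing_apply_trace_1 density_def)
  moreover have "posdef ((1 - t) *\<^sub>R blinfun_apply \<Psi> \<rho> + t *\<^sub>R maximally_mixed)"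
    using \<open>density (blinfun_apply \<Psi> \<rho>)\<close> assms(2,3)
    by (intro posdef_mix_maximally_mixed) (auto simp: density_def)
  ultimately show ?thesis
    unfolding SP_iff_posdef_image using \<open>density \<rho>\<close> by (auto intro!: exI[of _ \<rho>])
qed

lemma open_line_nbhd:
  fixes P Q :: "'a::real_normed_vector"
  assumes "open U" "P \<in> U"
  obtains b where "b > 0" "\<And>t. \<bar>t\<bar> < b \<Longrightarrow> (1 - t) *\<^sub>R P + t *\<^sub>R Q \<in> U"
proof -
  have "open ((\<lambda>t. (1 - t) *\<^sub>R P + t *\<^sub>R Q) -` U)"
    using assms(1) by (intro open_vimage continuous_intros)
  moreover have "0 \<in> (\<lambda>t. (1 - t) *\<^sub>R P + t *\<^sub>R Q) -` U"
    using assms(2) by simp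
  ultimately obtain b where "b > 0" "\<And>t. \<bar>t - 0\<bar> < b \<Longrightarrow> (1 - t) *\<^sub>R P + t *\<^sub>R Q \<in> U"
    unfolding open_real by blast
  then show ?thesis
    using that by simp
qed

lemma SN_subset_closure_of_SP:
  "SN \<subseteq> top_of_set HP closure_of (SP :: ((complex^'n^'n) \<Rightarrow>\<^sub>L (complex^'m^'m)) set)"
proof
  fix \<Psi> :: "(complex^'n^'n) \<Rightarrow>\<^sub>L (complex^'m^'m)"
  assume "\<Psi> \<in> SN"
  have "\<exists>\<Phi>. \<Phi> \<in> SP \<and> \<Phi> \<in> T" if "\<Psi> \<in> T" "openin (top_of_set HP) T" for T
  proof -
    obtain U where "open U" "T = HP \<inter> U"
      using \<open>openin (top_of_set HP) T\<close> openin_open by blast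
    then obtain b where "b > 0"
      and line: "\<And>t. \<bar>t\<bar> < b \<Longrightarrow> (1 - t) *\<^sub>R \<Psi> + t *\<^sub>R depolarizing \<in> U"
      using open_line_nbhd \<open>\<Psi> \<in> T\<close> by blast
    define t where "t = min 1 (b / 2)"
    have "(1 - t) *\<^sub>R \<Psi> + t *\<^sub>R depolarizing \<in> SP"
      using \<open>\<Psi> \<in> SN\<close> \<open>b > 0\<close> by (intro depolarizing_mix_SP) (auto simp: t_def)
    moreover have "(1 - t) *\<^sub>R \<Psi> + t *\<^sub>R depolarizing \<in> U"
      using \<open>b > 0\<close> by (intro line) (auto simp: t_def)
    ultimately show ?thesis
      using \<open>T = HP \<inter> U\<close> SP_def by blast
  qed
  moreover have "\<Psi> \<in> HP"
    using \<open>\<Psi> \<in> SN\<close> SN_def by blast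
  ultimately show "\<Psi> \<in> top_of_set HP closure_of SP"
    by (auto simp: in_closure_of)
qed

lemma interior_of_SN_subset_SP:
  "top_of_set HP interior_of SN \<subseteq> (SP :: ((complex^'n^'n) \<Rightarrow>\<^sub>L (complex^'m^'m)) set)"
proof
  fix \<Psi> :: "(complex^'n^'n) \<Rightarrow>\<^sub>L (complex^'m^'m)"
  assume "\<Psi> \<in> top_of_set HP interior_of SN"
  then obtain U where "open U" "\<Psi> \<in> HP \<inter> U" "HP \<inter> U \<subseteq> SN"
    unfolding interior_of_def openin_open by blast
  then obtain b where "b > 0"
    and line: "\<And>t. \<bar>t\<bar> < b \<Longrightarrow> (1 - t) *\<^sub>R \<Psi> + t *\<^sub>R depolarizing \<in> U"
    using open_line_nbhd by blast
  define c where "c = b / 2"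
  define \<Phi> where "\<Phi> = (1 - - c) *\<^sub>R \<Psi> + - c *\<^sub>R depolarizing"
  have "\<Phi> \<in> HP"
    unfolding \<Phi>_def using \<open>\<Psi> \<in> HP \<inter> U\<close>
    by (intro mem_affine[OF affine_HP _ depolarizing_HP]) auto
  moreover have "\<Phi> \<in> U"
    unfolding \<Phi>_def using \<open>b > 0\<close> by (intro line) (simp add: c_def)
  ultimately have "\<Phi> \<in> SN"
    using \<open>HP \<inter> U \<subseteq> SN\<close> by blast
  define s where "s = c / (1 + c)"
  have "c > 0"
    using \<open>b > 0\<close> by (simp add: c_def)
  then have "0 < s" "s \<le> 1" "(1 - s) * (1 + c) = 1" "s = (1 - s) * c"
    by (simp_all add: s_def field_simps)
  have "(1 - s) *\<^sub>R \<Phi> + s *\<^sub>R depolarizing =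
      ((1 - s) * (1 + c)) *\<^sub>R \<Psi> + (s - (1 - s) * c) *\<^sub>R depolarizing"
    by (simp add: \<Phi>_def scaleR_add_right algebra_simps)
  also have "\<dots> = \<Psi>"
    using \<open>(1 - s) * (1 + c) = 1\<close> \<open>s = (1 - s) * c\<close> by simp
  finally have "(1 - s) *\<^sub>R \<Phi> + s *\<^sub>R depolarizing = \<Psi>" .
  moreover have "(1 - s) *\<^sub>R \<Phi> + s *\<^sub>R depolarizing \<in> SP"
    using \<open>\<Phi> \<in> SN\<close> \<open>0 < s\<close> \<open>s \<le> 1\<close> by (rule depolarizing_mix_SP)
  ultimately show "\<Psi> \<in> SP"
    by simp
qed

theorem theorem4:
  shows "(top_of_set (HP :: ((complex^'n^'n) \<Rightarrow>\<^sub>L (complex^'m^'m)) set)) interior_of SN = SP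
     \<and> (top_of_set (HP :: ((complex^'n^'n) \<Rightarrow>\<^sub>L (complex^'m^'m)) set)) closure_of SP = SN"
proof
  show "top_of_set HP interior_of SN = (SP :: ((complex^'n^'n) \<Rightarrow>\<^sub>L (complex^'m^'m)) set)"
    using interior_of_SN_subset_SP interior_of_maximal[OF SP_subset_SN openin_SP] by blast
  show "top_of_set HP closure_of SP = (SN :: ((complex^'n^'n) \<Rightarrow>\<^sub>L (complex^'m^'m)) set)"
    using SN_subset_closure_of_SP closure_of_minimal[OF SP_subset_SN closedin_SN] by blast
qed

end
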